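(* Let $X$ be a Lindelöf $P$-space. Then $C_p(X)$ has a bounded resolution if and only if $X$ is countable and discrete.
   Context: A $P$-space is a Tychonoff space in which every countable intersection of open sets is open. $C_p(X)$ is the space of continuous real-valued functions on $X$ with the pointwise topology. Order $\mathbb{N}^{\mathbb{N}}$ pointwise. A bounded resolution of a locally convex space $F$ is a family $\{B_\alpha:\alpha\in\mathbb{N}^{\mathbb{N}}\}$ of bounded subsets covering $F$ with $B_\alpha\subseteq B_\beta$ whenever $\alpha\le\beta$. *)

theory Defs
  imports "HOL-Analysis.Analysis"
begin

definition Tychonoff_space :: "'a topology \<Rightarrow> bool" where
  "Tychonoff_space X \<longleftrightarrow> completely_regular_space X \<and> Hausdorff_space X"

definition P_space :: "'a topology \<Rightarrow> bool" where
  "P_space X \<longleftrightarrow> Tychonoff_space X \<and>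
     (\<forall>\<U>. countable \<U> \<and> \<U> \<noteq> {} \<and> (\<forall>U\<in>\<U>. openin X U) \<longrightarrow> openin X (\<Inter>\<U>))"

definition Cp_carrier :: "'a topology \<Rightarrow> ('a \<Rightarrow> real) set" where
  "Cp_carrier X = {f. continuous_map X euclideanreal f \<and> f \<in> extensional (topspace X)}"

definition Cp_topology :: "'a topology \<Rightarrow> ('a \<Rightarrow> real) topology" where
  "Cp_topology X = subtopology (product_topology (\<lambda>_. euclideanreal) (topspace X)) (Cp_carrier X)"

definition Cp_zero :: "'a topology \<Rightarrow> 'a \<Rightarrow> real" where
  "Cp_zero X = (\<lambda>x\<in>topspace X. 0)"

definition Cp_scale :: "'a topology \<Rightarrow> real \<Rightarrow> ('a \<Rightarrow> real) \<Rightarrow> 'a \<Rightarrow> real" where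
  "Cp_scale X t g = (\<lambda>x\<in>topspace X. t * g x)"

text \<open>Bounded subset of the topological vector space C_p(X): absorbed by every
  neighbourhood of 0 (E \<subseteq> t V for all sufficiently large t).\<close>
definition Cp_bounded :: "'a topology \<Rightarrow> ('a \<Rightarrow> real) set \<Rightarrow> bool" where
  "Cp_bounded X B \<longleftrightarrow> B \<subseteq> Cp_carrier X \<and>
     (\<forall>V. (\<exists>W. openin (Cp_topology X) W \<and> Cp_zero X \<in> W \<and> W \<subseteq> V) \<and> V \<subseteq> Cp_carrier X \<longrightarrow>
        (\<exists>s>0. \<forall>t>s. B \<subseteq> Cp_scale X t ` V))"

definition has_bounded_resolution :: "'a topology \<Rightarrow> bool" where
  "has_bounded_resolution X \<longleftrightarrow>
     (\<exists>B :: (nat \<Rightarrow> nat) \<Rightarrow> ('a \<Rightarrow> real) set.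
        (\<forall>\<alpha>. Cp_bounded X (B \<alpha>)) \<and>
        (\<Union>\<alpha>. B \<alpha>) = Cp_carrier X \<and>
        (\<forall>\<alpha> \<beta>. \<alpha> \<le> \<beta> \<longrightarrow> B \<alpha> \<subseteq> B \<beta>))"

end

(* A P-space is so disconnected that every countable subset D is C-embedded: points of D are
   separated by clopen sets, and countable intersections of open sets stay open.

   Given a bounded resolution {B_alpha}, let the cell C(s) be the union of the B_beta with beta
   extending the finite sequence s. Enumerate all finite sequences, and at each cell that is not
   locally dense extend a finite pattern (g_k on F_k) so that no member of the cell matches it.
   The limit pattern lives on a countable set, so it extends to a continuous h; h lies in some
   B_alpha and hence in every cell C(alpha|n), so all these cells are locally dense. A locally
   dense cell attains every real value at every point outside a finite set F_n. A point y outside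
   all F_n would give f_n in C(alpha|n) with f_n(y) = n; taking gamma as the coordinatewise
   maximum of the indices involved, all f_n lie in B_gamma, which is then unbounded at y. Hence
   X is the countable union of the F_n, and a countable P-space is discrete. Conversely, on
   X = {x_0, x_1, ...} the sets {f. |f(x_n)| <= alpha(n) for all n} form a bounded resolution. *)

theory Submission
  imports Defs
begin

lemma P_space_openin_Inter:
  assumes "P_space X" "countable \<U>" "\<forall>U\<in>\<U>. openin X U"
  shows "openin X (topspace X \<inter> \<Inter>\<U>)"
proof -
  have "openin X (\<Inter>(insert (topspace X) \<U>))"
    using assms unfolding P_space_def by auto
  then show ?thesis by simp
qed

lemma P_space_imp_Hausdorff_space: "P_space X \<Longrightarrow> Hausdorff_space X"
  and P_space_imp_completely_regular_space: "P_space X \<Longrightarrow> completely_regular_space X"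
  by (simp_all add: P_space_def Tychonoff_space_def)

lemma P_space_zero_set_openin:
  assumes P: "P_space X" and f: "continuous_map X euclideanreal f"
  shows "openin X {x\<in>topspace X. f x = 0}"
proof -
  define U where "U n = {x\<in>topspace X. f x \<in> {- inverse (real (Suc n))<..<inverse (real (Suc n))}}" for n
  have "openin X (U n)" for n
    unfolding U_def by (rule openin_continuous_map_preimage[OF f]) simp
  moreover have "f x = 0" if "x \<in> topspace X \<inter> \<Inter>(range U)" for x
  proof (rule ccontr)
    assume "f x \<noteq> 0"
    then have "0 < \<bar>f x\<bar>" by simp
    then obtain n where "inverse (real (Suc n)) < \<bar>f x\<bar>"
      using reals_Archimedean by blast
    moreover have "f x \<in> {- inverse (real (Suc n))<..<inverse (real (Suc n))}"
      using that by (auto simp: U_def)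
    ultimately show False by auto
  qed
  then have "topspace X \<inter> \<Inter>(range U) = {x\<in>topspace X. f x = 0}"
    by (auto simp: U_def)
  ultimately show ?thesis
    using P_space_openin_Inter[OF P, of "range U"] by auto
qed

lemma P_space_separating_clopen:
  assumes P: "P_space X" and "a \<in> topspace X" "b \<in> topspace X" "a \<noteq> b"
  shows "\<exists>Z. openin X Z \<and> closedin X Z \<and> a \<in> Z \<and> b \<notin> Z"
proof -
  have "closedin X {b}"
    using closedin_t1_singleton[OF Hausdorff_imp_t1_space[OF P_space_imp_Hausdorff_space[OF P]]] assms
    by blast
  then obtain f where f: "continuous_map X (top_of_set {0..1::real}) f" "f a = 0" "f ` {b} \<subseteq> {1}"
    using P_space_imp_completely_regular_space[OF P] assms
    unfolding completely_regular_space_def by blast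
  then have fc: "continuous_map X euclideanreal f"
    using continuous_map_in_subtopology by blast
  define Z where "Z = {x\<in>topspace X. f x = 0}"
  have "openin X Z"
    unfolding Z_def by (rule P_space_zero_set_openin[OF P fc])
  moreover have "a \<in> Z" "b \<notin> Z"
    using f assms by (auto simp: Z_def)
  moreover have "closedin X Z"
    using closedin_continuous_map_preimage[OF fc, of "{0}"] by (simp add: Z_def)
  ultimately show ?thesis by blast
qed

lemma P_space_isolating_clopen:
  assumes P: "P_space X" and D: "countable D" "D \<subseteq> topspace X" and d: "d \<in> D"
  shows "\<exists>Z. openin X Z \<and> closedin X Z \<and> Z \<inter> D = {d}"
proof -
  obtain Q where Q: "\<And>b. b \<in> D - {d} \<Longrightarrow> openin X (Q b) \<and> closedin X (Q b) \<and> d \<in> Q b \<and> b \<notin> Q b"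
    using P_space_separating_clopen[OF P] D d by (metis DiffE insertI1 subsetD)
  define Z where "Z = topspace X \<inter> \<Inter>(Q ` (D - {d}))"
  have "openin X Z"
    unfolding Z_def using P_space_openin_Inter[OF P, of "Q ` (D - {d})"] Q D by auto
  moreover have "closedin X (\<Inter>(insert (topspace X) (Q ` (D - {d}))))"
    using Q by (intro closedin_Inter) auto
  moreover have "Z \<inter> D = {d}"
    using Q D d by (auto simp: Z_def)
  ultimately show ?thesis
    unfolding Z_def by auto
qed

lemma continuous_map_locally_constant:
  assumes "\<And>x. x \<in> topspace X \<Longrightarrow> \<exists>T. openin X T \<and> x \<in> T \<and> (\<forall>z\<in>T. h z = h x)"
  shows "continuous_map X euclideanreal h"
proof -
  have "openin X {x \<in> topspace X. h x \<in> U}" for U :: "real set"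
  proof -
    have "\<exists>T. openin X T \<and> x \<in> T \<and> T \<subseteq> {x \<in> topspace X. h x \<in> U}"
      if x: "x \<in> topspace X" "h x \<in> U" for x
    proof -
      obtain T where T: "openin X T" "x \<in> T" "\<forall>z\<in>T. h z = h x"
        using assms[OF x(1)] by blast
      have "T \<subseteq> {x \<in> topspace X. h x \<in> U}"
        using openin_subset[OF T(1)] T(3) x(2) by fastforce
      with T show ?thesis by blast
    qed
    then show ?thesis
      by (subst openin_subopen) blast
  qed
  then show ?thesis by (simp add: continuous_map_def)
qed

lemma Cp_zero_in_Cp_carrier: "Cp_zero X \<in> Cp_carrier X"
proof -
  have "continuous_map X euclideanreal (Cp_zero X)"
    unfolding Cp_zero_def by (rule continuous_map_eq[of _ _ "\<lambda>x. 0"]) auto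
  then show ?thesis unfolding Cp_carrier_def Cp_zero_def by auto
qed

lemma P_space_continuous_first_hit:
  fixes Z :: "nat \<Rightarrow> 'a set"
  assumes P: "P_space X" and Z: "\<And>n. openin X (Z n)" "\<And>n. closedin X (Z n)"
  shows "continuous_map X euclideanreal (\<lambda>x. if \<exists>n. x \<in> Z n then c (LEAST n. x \<in> Z n) else 0)"
    (is "continuous_map X euclideanreal ?h")
proof (rule continuous_map_locally_constant)
  define first where "first x = (LEAST n. x \<in> Z n)" for x
  have first_mem: "x \<in> Z (first x)" if "x \<in> Z n" for x n
    unfolding first_def by (rule LeastI[of "\<lambda>n. x \<in> Z n", OF that])
  have first_least: "x \<notin> Z k" if "k < first x" for x k
    using that unfolding first_def by (rule not_less_Least)
  fix x assume x: "x \<in> topspace X"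
  show "\<exists>T. openin X T \<and> x \<in> T \<and> (\<forall>z\<in>T. ?h z = ?h x)"
  proof (cases "\<exists>n. x \<in> Z n")
    case True
    define T where "T = Z (first x) - \<Union> (Z ` {..<first x})"
    have "closedin X (\<Union> (Z ` {..<first x}))"
      using Z(2) by (intro closedin_Union) auto
    then have "openin X T"
      unfolding T_def by (rule openin_diff[OF Z(1)])
    moreover have "x \<in> T"
      using first_mem first_least True unfolding T_def by blast
    moreover have "first z = first x" if "z \<in> T" for z
    proof -
      have "z \<in> Z (first x)" "\<And>k. k < first x \<Longrightarrow> z \<notin> Z k"
        using that unfolding T_def by blast+
      then show ?thesis
        unfolding first_def[of z] by (metis Least_equality not_le)
    qed
    ultimately show ?thesis
      using True unfolding T_def first_def by (metis DiffD1)
  next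
    case False
    define T where "T = topspace X \<inter> \<Inter> (range (\<lambda>n. topspace X - Z n))"
    have "openin X T"
      unfolding T_def using Z(2) by (intro P_space_openin_Inter[OF P]) auto
    moreover have "x \<in> T" using False x by (auto simp: T_def)
    ultimately show ?thesis
      using False by (auto simp: T_def)
  qed
qed

lemma P_space_countable_extension:
  assumes P: "P_space X" and D: "countable D" "D \<subseteq> topspace X"
  shows "\<exists>h\<in>Cp_carrier X. \<forall>d\<in>D. h d = L d"
proof (cases "D = {}")
  case True
  then show ?thesis using Cp_zero_in_Cp_carrier by blast
next
  case False
  define e where "e = from_nat_into D"
  have "\<forall>n. \<exists>Z. openin X Z \<and> closedin X Z \<and> Z \<inter> D = {e n}"
    using P_space_isolating_clopen[OF P D] False by (simp add: e_def from_nat_into)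
  then obtain Z where "\<forall>n. openin X (Z n) \<and> closedin X (Z n) \<and> Z n \<inter> D = {e n}"
    by (rule choice[THEN exE])
  then have Z: "\<And>n. openin X (Z n)" "\<And>n. closedin X (Z n)" "\<And>n. Z n \<inter> D = {e n}"
    by auto
  define h where "h = (\<lambda>x\<in>topspace X. if \<exists>n. x \<in> Z n then L (e (LEAST n. x \<in> Z n)) else 0)"
  have "continuous_map X euclideanreal h"
    using P_space_continuous_first_hit[OF P Z(1,2), where c = "\<lambda>n. L (e n)"]
    by (rule continuous_map_eq) (simp add: h_def)
  moreover have "h \<in> extensional (topspace X)"
    by (simp add: h_def)
  moreover have "h d = L d" if d: "d \<in> D" for d
  proof -
    define n where "n = (LEAST n. d \<in> Z n)"
    have "d \<in> Z (to_nat_on D d)"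
      using Z(3)[of "to_nat_on D d"] d D(1) by (auto simp: e_def)
    then have "d \<in> Z n"
      unfolding n_def by (rule LeastI)
    then have "e n = d" using Z(3)[of n] d by (metis IntI singletonD)
    then show ?thesis using d D(2) \<open>d \<in> Z n\<close> by (auto simp: h_def n_def)
  qed
  ultimately show ?thesis
    unfolding Cp_carrier_def by blast
qed

lemma P_space_extension_of_coherent_sequence:
  assumes P: "P_space X"
    and F: "\<And>k. finite (F k)" "\<And>k. F k \<subseteq> topspace X" "\<And>k. F k \<subseteq> F (Suc k)"
    and g: "\<And>k x. x \<in> F k \<Longrightarrow> g (Suc k) x = g k x"
  shows "\<exists>h\<in>Cp_carrier X. \<forall>k. \<forall>x\<in>F k. h x = g k x"
proof -
  have coherent: "x \<in> F m \<and> g m x = g k x" if "k \<le> m" "x \<in> F k" for k m x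
    using that(1) by (induction m rule: dec_induct) (use that(2) F(3) g in auto)
  define L where "L x = g (LEAST k. x \<in> F k) x" for x
  have L: "L x = g k x" if "x \<in> F k" for x k
  proof -
    have "(LEAST k. x \<in> F k) \<le> k" "x \<in> F (LEAST k. x \<in> F k)"
      using that by (auto intro: Least_le LeastI)
    then show ?thesis
      unfolding L_def using coherent by metis
  qed
  have "countable (\<Union>k. F k)"
    using F(1) by (simp add: countable_finite)
  then obtain h where "h \<in> Cp_carrier X" "\<forall>x\<in>\<Union>k. F k. h x = L x"
    using P_space_countable_extension[OF P, of "\<Union>k. F k"] F(2) by blast
  then show ?thesis
    using L by auto
qed

lemma P_space_countable_imp_discrete:
  assumes P: "P_space X" and c: "countable (topspace X)"
  shows "X = discrete_topology (topspace X)"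
proof -
  have "openin X {x}" if x: "x \<in> topspace X" for x
  proof -
    let ?U = "(\<lambda>b. topspace X - {b}) ` (topspace X - {x})"
    have "\<forall>U\<in>?U. openin X U"
      using closedin_t1_singleton[OF Hausdorff_imp_t1_space[OF P_space_imp_Hausdorff_space[OF P]]]
      by blast
    then have "openin X (topspace X \<inter> \<Inter>?U)"
      using c by (intro P_space_openin_Inter[OF P]) auto
    moreover have "topspace X \<inter> \<Inter>?U = {x}"
      using x by auto
    ultimately show ?thesis by simp
  qed
  then show ?thesis
    using discrete_topology_unique[of "topspace X" X] by metis
qed

lemma Cp_scale_in_Cp_carrier:
  assumes "f \<in> Cp_carrier X"
  shows "Cp_scale X t f \<in> Cp_carrier X"
proof -
  have "continuous_map X euclideanreal (\<lambda>x. t * f x)"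
    using assms by (intro continuous_map_real_mult_left) (simp add: Cp_carrier_def)
  then have "continuous_map X euclideanreal (Cp_scale X t f)"
    by (rule continuous_map_eq) (simp add: Cp_scale_def)
  then show ?thesis
    by (simp add: Cp_carrier_def Cp_scale_def)
qed

lemma Cp_scale_inverse:
  assumes "f \<in> Cp_carrier X" "t \<noteq> 0"
  shows "Cp_scale X t (Cp_scale X (1 / t) f) = f"
proof
  fix x
  show "Cp_scale X t (Cp_scale X (1 / t) f) x = f x"
    using assms by (cases "x \<in> topspace X") (auto simp: Cp_scale_def Cp_carrier_def extensional_def)
qed

lemma Cp_bounded_imp_pointwise_bounded:
  assumes B: "Cp_bounded X B" and y: "y \<in> topspace X"
  shows "\<exists>M. \<forall>f\<in>B. \<bar>f y\<bar> \<le> M"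
proof -
  define V where "V = {f \<in> Cp_carrier X. f y \<in> {-1<..<1::real}}"
  let ?P = "product_topology (\<lambda>_. euclideanreal) (topspace X)"
  have "openin ?P {f \<in> topspace ?P. f y \<in> {-1<..<1::real}}"
    by (rule openin_continuous_map_preimage[OF continuous_map_product_projection[OF y]]) simp
  moreover have "V = {f \<in> topspace ?P. f y \<in> {-1<..<1::real}} \<inter> Cp_carrier X"
    unfolding V_def Cp_carrier_def by (auto simp: PiE_def)
  ultimately have "openin (Cp_topology X) V"
    unfolding Cp_topology_def by (simp add: openin_subtopology_Int)
  moreover have "Cp_zero X \<in> V"
    using Cp_zero_in_Cp_carrier y by (simp add: V_def Cp_zero_def)
  moreover have "V \<subseteq> Cp_carrier X"
    by (auto simp: V_def)
  ultimately obtain s where s: "s > 0" "\<forall>t>s. B \<subseteq> Cp_scale X t ` V"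
    using B unfolding Cp_bounded_def by blast
  have "\<bar>f y\<bar> \<le> s + 1" if f: "f \<in> B" for f
  proof -
    have "B \<subseteq> Cp_scale X (s + 1) ` V"
      using s by simp
    then obtain v where v: "v \<in> V" "f = Cp_scale X (s + 1) v"
      using f by blast
    then have "\<bar>f y\<bar> = (s + 1) * \<bar>v y\<bar>"
      using s(1) y by (simp add: Cp_scale_def abs_mult)
    also have "\<dots> \<le> s + 1"
      using v(1) s(1) by (intro mult_left_le) (auto simp: V_def)
    finally show ?thesis .
  qed
  then show ?thesis by blast
qed

lemma Cp_zero_neighbourhood_contains_box:
  assumes W: "openin (Cp_topology X) W" "Cp_zero X \<in> W"
  shows "\<exists>F e. finite F \<and> F \<subseteq> topspace X \<and> e > 0 \<and>
           (\<forall>v\<in>Cp_carrier X. (\<forall>i\<in>F. \<bar>v i\<bar> < e) \<longrightarrow> v \<in> W)"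
proof -
  let ?S = "topspace X"
  obtain W0 where W0: "openin (product_topology (\<lambda>_. euclideanreal) ?S) W0" "W = W0 \<inter> Cp_carrier X"
    using W(1) unfolding Cp_topology_def openin_subtopology by blast
  have "Cp_zero X \<in> W0" using W(2) W0(2) by blast
  then obtain U where U: "finite {i \<in> ?S. U i \<noteq> topspace euclideanreal}"
      "\<forall>i\<in>?S. openin euclideanreal (U i)" "Cp_zero X \<in> Pi\<^sub>E ?S U" "Pi\<^sub>E ?S U \<subseteq> W0"
    using W0(1) unfolding openin_product_topology_alt by blast
  define F where "F = {i \<in> ?S. U i \<noteq> UNIV}"
  have "\<exists>\<epsilon>>0. ball 0 \<epsilon> \<subseteq> U i" if i: "i \<in> ?S" for i
  proof -
    have "0 \<in> U i" using U(3) i by (auto simp: Cp_zero_def PiE_def Pi_def)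
    then show ?thesis using U(2) i open_contains_ball by auto
  qed
  then obtain \<epsilon> where \<epsilon>: "\<And>i. i \<in> ?S \<Longrightarrow> \<epsilon> i > 0 \<and> ball 0 (\<epsilon> i) \<subseteq> U i"
    by metis
  define e where "e = Min (insert 1 (\<epsilon> ` F))"
  have "finite F" using U(1) by (simp add: F_def)
  then have e: "e > 0" "\<And>i. i \<in> F \<Longrightarrow> e \<le> \<epsilon> i"
    using \<epsilon> by (auto simp: e_def F_def)
  have "v \<in> W" if v: "v \<in> Cp_carrier X" "\<forall>i\<in>F. \<bar>v i\<bar> < e" for v
  proof -
    have "v i \<in> U i" if "i \<in> ?S" for i
    proof (cases "i \<in> F")
      case True
      then have "\<bar>v i\<bar> < \<epsilon> i" using v(2) e(2) by fastforce
      then have "v i \<in> ball 0 (\<epsilon> i)" by (simp add: dist_real_def)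
      then show ?thesis using \<epsilon> that by blast
    next
      case False
      then show ?thesis using that by (simp add: F_def)
    qed
    then have "v \<in> Pi\<^sub>E ?S U"
      using v(1) by (auto simp: Cp_carrier_def PiE_def)
    then show ?thesis using U(4) W0(2) v(1) by blast
  qed
  moreover have "F \<subseteq> ?S" by (auto simp: F_def)
  ultimately show ?thesis using \<open>finite F\<close> e(1) by blast
qed

lemma Cp_bounded_if_pointwise_dominated:
  assumes B: "B \<subseteq> Cp_carrier X" and w: "\<And>f x. f \<in> B \<Longrightarrow> x \<in> topspace X \<Longrightarrow> \<bar>f x\<bar> \<le> w x"
  shows "Cp_bounded X B"
  unfolding Cp_bounded_def
proof (intro conjI allI impI B)
  fix V
  assume "(\<exists>W. openin (Cp_topology X) W \<and> Cp_zero X \<in> W \<and> W \<subseteq> V) \<and> V \<subseteq> Cp_carrier X"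
  then obtain W where W: "openin (Cp_topology X) W" "Cp_zero X \<in> W" "W \<subseteq> V"
    by blast
  obtain F e where F: "finite F" "F \<subseteq> topspace X" "e > 0"
      "\<forall>v\<in>Cp_carrier X. (\<forall>i\<in>F. \<bar>v i\<bar> < e) \<longrightarrow> v \<in> W"
    using Cp_zero_neighbourhood_contains_box[OF W(1,2)] by blast
  define s where "s = (1 + (\<Sum>i\<in>F. \<bar>w i\<bar>)) / e"
  have "s > 0"
    unfolding s_def using F(3) by (intro divide_pos_pos add_pos_nonneg sum_nonneg) auto
  moreover have "B \<subseteq> Cp_scale X t ` V" if t: "t > s" for t
  proof
    fix f assume f: "f \<in> B"
    have "t > 0" using t \<open>s > 0\<close> by simp
    define v where "v = Cp_scale X (1 / t) f"
    have v: "v \<in> Cp_carrier X"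
      unfolding v_def using f B by (intro Cp_scale_in_Cp_carrier) blast
    have "\<bar>v i\<bar> < e" if i: "i \<in> F" for i
    proof -
      have "\<bar>f i\<bar> \<le> (\<Sum>i\<in>F. \<bar>w i\<bar>)"
        using w[OF f] F(1,2) member_le_sum[of i F "\<lambda>i. \<bar>w i\<bar>"] i by fastforce
      also have "\<dots> < t * e"
        using t F(3) by (simp add: s_def field_simps)
      finally show ?thesis
        using \<open>t > 0\<close> F(2) i by (auto simp: v_def Cp_scale_def abs_mult field_simps)
    qed
    then have "v \<in> V" using F(4) v W(3) by blast
    moreover have "Cp_scale X t v = f"
      unfolding v_def using f B \<open>t > 0\<close> by (intro Cp_scale_inverse) auto
    ultimately show "f \<in> Cp_scale X t ` V" by blast
  qed
  ultimately show "\<exists>s>0. \<forall>t>s. B \<subseteq> Cp_scale X t ` V" by blast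
qed

lemma countable_imp_has_bounded_resolution:
  assumes c: "countable (topspace X)"
  shows "has_bounded_resolution X"
proof -
  define idx where "idx = to_nat_on (topspace X)"
  define B where "B \<alpha> = {f \<in> Cp_carrier X. \<forall>x\<in>topspace X. \<bar>f x\<bar> \<le> real (\<alpha> (idx x))}" for \<alpha>
  have "Cp_bounded X (B \<alpha>)" for \<alpha>
    by (rule Cp_bounded_if_pointwise_dominated[where w = "\<lambda>x. real (\<alpha> (idx x))"]) (auto simp: B_def)
  moreover have "f \<in> (\<Union>\<alpha>. B \<alpha>)" if f: "f \<in> Cp_carrier X" for f
  proof -
    define \<alpha> where "\<alpha> n = nat \<lceil>\<bar>f (from_nat_into (topspace X) n)\<bar>\<rceil>" for n
    have "\<bar>f x\<bar> \<le> real (\<alpha> (idx x))" if "x \<in> topspace X" for x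
      using c that by (simp add: \<alpha>_def idx_def real_nat_ceiling_ge)
    then show ?thesis using f by (auto simp: B_def)
  qed
  moreover have "B \<alpha> \<subseteq> B \<beta>" if "\<alpha> \<le> \<beta>" for \<alpha> \<beta>
    using that unfolding B_def le_fun_def by (force intro: order_trans)
  ultimately show ?thesis
    unfolding has_bounded_resolution_def by (intro exI[of _ B]) (auto simp: B_def)
qed

definition resolution_cell :: "((nat \<Rightarrow> nat) \<Rightarrow> 'b set) \<Rightarrow> nat list \<Rightarrow> 'b set" where
  "resolution_cell B s = (\<Union>\<beta>\<in>{\<beta>. \<forall>i<length s. \<beta> i = s ! i}. B \<beta>)"

lemma mem_resolution_cell_map_upt:
  "f \<in> resolution_cell B (map \<alpha> [0..<n]) \<longleftrightarrow> (\<exists>\<beta>. (\<forall>i<n. \<beta> i = \<alpha> i) \<and> f \<in> B \<beta>)"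
  unfolding resolution_cell_def by auto

definition locally_dense_cell :: "'a topology \<Rightarrow> ((nat \<Rightarrow> nat) \<Rightarrow> ('a \<Rightarrow> real) set) \<Rightarrow> nat list \<Rightarrow> bool" where
  "locally_dense_cell X B s \<longleftrightarrow> (\<exists>g\<in>Cp_carrier X. \<exists>F. finite F \<and> F \<subseteq> topspace X \<and>
     (\<forall>g'\<in>Cp_carrier X. \<forall>F'. finite F' \<and> F \<subseteq> F' \<and> F' \<subseteq> topspace X \<and> (\<forall>x\<in>F. g' x = g x) \<longrightarrow>
        (\<exists>f\<in>resolution_cell B s. \<forall>x\<in>F'. f x = g' x)))"

lemma not_locally_dense_cell_escapes:
  assumes "\<not> locally_dense_cell X B s" "g \<in> Cp_carrier X" "finite F" "F \<subseteq> topspace X"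
  shows "\<exists>g'\<in>Cp_carrier X. \<exists>F'. finite F' \<and> F \<subseteq> F' \<and> F' \<subseteq> topspace X \<and> (\<forall>x\<in>F. g' x = g x) \<and>
           \<not> (\<exists>f\<in>resolution_cell B s. \<forall>x\<in>F'. f x = g' x)"
proof (rule ccontr)
  assume "\<not> ?thesis"
  then have "\<forall>g'\<in>Cp_carrier X. \<forall>F'. finite F' \<and> F \<subseteq> F' \<and> F' \<subseteq> topspace X \<and> (\<forall>x\<in>F. g' x = g x) \<longrightarrow>
      (\<exists>f\<in>resolution_cell B s. \<forall>x\<in>F'. f x = g' x)"
    by blast
  with assms(2-4) have "locally_dense_cell X B s"
    unfolding locally_dense_cell_def by (intro bexI[of _ g] exI[of _ F]) simp_all
  with assms(1) show False ..
qed

lemma exists_branch_of_locally_dense_cells: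
  assumes P: "P_space X" and cov: "Cp_carrier X \<subseteq> (\<Union>\<alpha>. B \<alpha>)"
  shows "\<exists>\<alpha>. \<forall>n. locally_dense_cell X B (map \<alpha> [0..<n])"
proof -
  let ?C = "Cp_carrier X" and ?S = "topspace X"
  define bad where "bad k \<longleftrightarrow> \<not> locally_dense_cell X B (from_nat k)" for k
  define admissible where
    "admissible p \<longleftrightarrow> fst p \<in> ?C \<and> finite (snd p) \<and> snd p \<subseteq> ?S" for p :: "('a \<Rightarrow> real) \<times> 'a set"
  define extends where
    "extends k p q \<longleftrightarrow> snd p \<subseteq> snd q \<and> (\<forall>x\<in>snd p. fst q x = fst p x) \<and>
       (bad k \<longrightarrow> \<not> (\<exists>f\<in>resolution_cell B (from_nat k). \<forall>x\<in>snd q. f x = fst q x))"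
    for k and p q :: "('a \<Rightarrow> real) \<times> 'a set"
  have step: "\<exists>q. admissible q \<and> extends k p q" if p: "admissible p" for k p
  proof (cases "bad k")
    case False
    then have "extends k p p" by (simp add: extends_def)
    then show ?thesis using p by blast
  next
    case True
    have "fst p \<in> ?C" "finite (snd p)" "snd p \<subseteq> ?S"
      using p by (simp_all add: admissible_def)
    from not_locally_dense_cell_escapes[OF True[unfolded bad_def] this]
    obtain g' F' where "g' \<in> ?C" "finite F'" "snd p \<subseteq> F'" "F' \<subseteq> ?S"
        "\<forall>x\<in>snd p. g' x = fst p x" "\<not> (\<exists>f\<in>resolution_cell B (from_nat k). \<forall>x\<in>F'. f x = g' x)"
      by blast
    then have "admissible (g', F') \<and> extends k p (g', F')"
      by (simp add: admissible_def extends_def)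
    then show ?thesis by blast
  qed
  have "admissible (Cp_zero X, {})"
    by (simp add: admissible_def Cp_zero_in_Cp_carrier)
  then obtain p where p: "\<And>k. admissible (p k)" "\<And>k. extends k (p k) (p (Suc k))"
    using dependent_nat_choice[of "\<lambda>_. admissible" extends] step by blast
  obtain h where h: "h \<in> ?C" "\<And>k x. x \<in> snd (p k) \<Longrightarrow> h x = fst (p k) x"
    using P_space_extension_of_coherent_sequence[OF P, of "\<lambda>k. snd (p k)" "\<lambda>k. fst (p k)"] p
    unfolding admissible_def extends_def by blast
  obtain \<alpha> where "h \<in> B \<alpha>" using h(1) cov by blast
  have "locally_dense_cell X B (map \<alpha> [0..<n])" for n
  proof (rule ccontr)
    obtain k where k: "from_nat k = map \<alpha> [0..<n]"
      by (metis from_nat_to_nat)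
    assume "\<not> locally_dense_cell X B (map \<alpha> [0..<n])"
    then have "bad k" by (simp add: bad_def k)
    moreover have "h \<in> resolution_cell B (from_nat k)"
      unfolding k mem_resolution_cell_map_upt using \<open>h \<in> B \<alpha>\<close> by blast
    ultimately show False
      using p(2)[of k] h(2)[of _ "Suc k"] unfolding extends_def by blast
  qed
  then show ?thesis by blast
qed

lemma locally_dense_cell_attains_all_values:
  assumes P: "P_space X" and dense: "locally_dense_cell X B s"
  shows "\<exists>F. finite F \<and> (\<forall>y\<in>topspace X - F. \<forall>c. \<exists>f\<in>resolution_cell B s. f y = c)"
proof -
  let ?C = "Cp_carrier X" and ?S = "topspace X"
  obtain g F where g: "g \<in> ?C" and F: "finite F" "F \<subseteq> ?S" and
    realise: "\<forall>g'\<in>?C. \<forall>F'. finite F' \<and> F \<subseteq> F' \<and> F' \<subseteq> ?S \<and> (\<forall>x\<in>F. g' x = g x) \<longrightarrow>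
        (\<exists>f\<in>resolution_cell B s. \<forall>x\<in>F'. f x = g' x)"
    using dense unfolding locally_dense_cell_def by (elim bexE exE conjE) (rule that)
  have "\<exists>f\<in>resolution_cell B s. f y = c" if y: "y \<in> ?S - F" for y c
  proof -
    have "closedin X F"
      using F Hausdorff_imp_t1_space[OF P_space_imp_Hausdorff_space[OF P]] t1_space_closedin_finite
      by blast
    then obtain u where u: "continuous_map X (top_of_set {0..1::real}) u" "u y = 0" "u ` F \<subseteq> {1}"
      using P_space_imp_completely_regular_space[OF P] y
      unfolding completely_regular_space_def by blast
    have u_cont: "continuous_map X euclideanreal u"
      using u(1) continuous_map_in_subtopology by blast
    have g_cont: "continuous_map X euclideanreal g"
      using g by (simp add: Cp_carrier_def)
    have g'_cont: "continuous_map X euclideanreal (\<lambda>x. g x + (c - g y) * (1 - u x))"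
      by (intro continuous_map_add continuous_map_real_mult_left continuous_map_diff g_cont u_cont
          continuous_map_const[THEN iffD2]) simp
    define g' where "g' = (\<lambda>x\<in>?S. g x + (c - g y) * (1 - u x))"
    have "continuous_map X euclideanreal g'"
      using g'_cont by (rule continuous_map_eq) (simp add: g'_def)
    then have g': "g' \<in> ?C" by (simp add: Cp_carrier_def g'_def)
    have "\<forall>x\<in>F. g' x = g x" using F(2) u(3) by (auto simp: g'_def)
    then have "finite (insert y F) \<and> F \<subseteq> insert y F \<and> insert y F \<subseteq> ?S \<and> (\<forall>x\<in>F. g' x = g x)"
      using F y by auto
    then have "\<exists>f\<in>resolution_cell B s. \<forall>x\<in>insert y F. f x = g' x"
      by (rule realise[rule_format, OF g'])
    then obtain f where "f \<in> resolution_cell B s" "\<forall>x\<in>insert y F. f x = g' x"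
      by blast
    moreover have "g' y = c" using y u(2) by (simp add: g'_def)
    ultimately show ?thesis by auto
  qed
  then show ?thesis using F(1) by blast
qed

lemma resolution_cells_bounded_above:
  assumes mono: "\<And>\<alpha> \<beta>. \<alpha> \<le> \<beta> \<Longrightarrow> B \<alpha> \<subseteq> B \<beta>"
    and f: "\<And>n. f n \<in> resolution_cell B (map \<alpha> [0..<n])"
  shows "\<exists>\<gamma>. \<forall>n. f n \<in> B \<gamma>"
proof -
  have "\<forall>n. \<exists>\<beta>. (\<forall>i<n. \<beta> i = \<alpha> i) \<and> f n \<in> B \<beta>"
    by (intro allI) (rule f[unfolded mem_resolution_cell_map_upt])
  then obtain \<beta> where \<beta>: "\<And>n. (\<forall>i<n. \<beta> n i = \<alpha> i) \<and> f n \<in> B (\<beta> n)"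
    by (metis choice)
  \<comment> \<open>only \<beta> 0, ..., \<beta> i can differ from \<alpha> at i, so \<gamma> i is a finite maximum\<close>
  define \<gamma> where "\<gamma> i = Max (insert (\<alpha> i) ((\<lambda>j. \<beta> j i) ` {..i}))" for i
  have "\<beta> n \<le> \<gamma>" for n
  proof (rule le_funI)
    fix i
    have "\<beta> n i \<in> insert (\<alpha> i) ((\<lambda>j. \<beta> j i) ` {..i})"
      using \<beta>[of n] by (cases "n \<le> i") auto
    then show "\<beta> n i \<le> \<gamma> i"
      unfolding \<gamma>_def by (intro Max_ge) auto
  qed
  then show ?thesis using \<beta> mono by blast
qed

lemma has_bounded_resolution_imp_countable:
  assumes P: "P_space X" and "has_bounded_resolution X"
  shows "countable (topspace X)"
proof -
  obtain B :: "(nat \<Rightarrow> nat) \<Rightarrow> ('a \<Rightarrow> real) set" where B: "(\<forall>\<alpha>. Cp_bounded X (B \<alpha>)) \<and>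
      (\<Union>\<alpha>. B \<alpha>) = Cp_carrier X \<and> (\<forall>\<alpha> \<beta>. \<alpha> \<le> \<beta> \<longrightarrow> B \<alpha> \<subseteq> B \<beta>)"
    using assms(2) unfolding has_bounded_resolution_def ..
  then have bounded: "\<And>\<alpha>. Cp_bounded X (B \<alpha>)" and cov: "(\<Union>\<alpha>. B \<alpha>) = Cp_carrier X"
    and mono: "\<And>\<alpha> \<beta>. \<alpha> \<le> \<beta> \<Longrightarrow> B \<alpha> \<subseteq> B \<beta>"
    by auto
  obtain \<alpha> where "\<And>n. locally_dense_cell X B (map \<alpha> [0..<n])"
    using exists_branch_of_locally_dense_cells[OF P] cov by blast
  then have "\<forall>n. \<exists>F. finite F \<and>
      (\<forall>y\<in>topspace X - F. \<forall>c. \<exists>f\<in>resolution_cell B (map \<alpha> [0..<n]). f y = c)"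
    using locally_dense_cell_attains_all_values[OF P] by blast
  then obtain F where F: "\<And>n. finite (F n)"
    "\<And>n. \<forall>y\<in>topspace X - F n. \<forall>c. \<exists>f\<in>resolution_cell B (map \<alpha> [0..<n]). f y = c"
    by (metis choice)
  have "y \<in> (\<Union>n. F n)" if y: "y \<in> topspace X" for y
  proof (rule ccontr)
    assume "y \<notin> (\<Union>n. F n)"
    then have "\<forall>n. \<exists>f. f \<in> resolution_cell B (map \<alpha> [0..<n]) \<and> f y = real n"
      using F(2) y by blast
    then obtain f where f: "\<And>n. f n \<in> resolution_cell B (map \<alpha> [0..<n]) \<and> f n y = real n"
      by (metis choice)
    then obtain \<gamma> where \<gamma>: "\<forall>n. f n \<in> B \<gamma>"
      using resolution_cells_bounded_above[of B f \<alpha>] mono by blast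
    obtain M where "\<forall>g\<in>B \<gamma>. \<bar>g y\<bar> \<le> M"
      using Cp_bounded_imp_pointwise_bounded[OF bounded y] by blast
    then have "\<bar>f n y\<bar> \<le> M" for n
      using \<gamma> by blast
    then have "real (Suc (nat \<lceil>M\<rceil>)) \<le> M"
      using f by (metis abs_of_nat)
    then show False
      using real_nat_ceiling_ge[of M] by simp
  qed
  moreover have "countable (\<Union>n. F n)"
    using F(1) by (simp add: countable_finite)
  ultimately show ?thesis
    by (meson countable_subset subsetI)
qed

theorem proposition3p4:
  fixes X :: "'a topology"
  assumes "Lindelof_space X" and "P_space X"
  shows "has_bounded_resolution X \<longleftrightarrow>
           countable (topspace X) \<and> X = discrete_topology (topspace X)"
proof
  assume "has_bounded_resolution X"
  then have "countable (topspace X)"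
    using has_bounded_resolution_imp_countable[OF assms(2)] by blast
  then show "countable (topspace X) \<and> X = discrete_topology (topspace X)"
    using P_space_countable_imp_discrete[OF assms(2)] by blast
qed (use countable_imp_has_bounded_resolution in blast)

end
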